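(* Let $n\ge 1$, $L>0$, and let $f:[0,1]^n\to\mathbb{R}$ satisfy $|f(x)-f(y)|\le L\|x-y\|$ for all $x,y\in[0,1]^n$, and let $x_*\in[0,1]^n$ be a minimizer of $f$. Run the algorithm described in the context on $f$ for $T\ge1$ queries, producing edge vectors $v_1,\dots,v_T$ and values $f_t=f(P(x_t))$. Then $$\sum_{t=1}^T f_t-\sum_{t=1}^T f(x_* )\le (1+\theta)L\sum_{t=1}^T\|v_t\|,$$ where $\theta=2^{1/n}$.
   Context: Notation: $\|\cdot\|$ is the Euclidean norm; $\Omega=[0,1]^n$; $\theta=2^{1/n}$; $P:\mathbb{R}^n\to\Omega$ is the Euclidean projection onto $\Omega$ (coordinatewise clipping to $[0,1]$); $e_i$ is the $i$-th standard basis vector and $v(i)$ the $i$-th coordinate of $v$. The algorithm maintains a list of candidates, each a triple (center $x$, edge vector $v$, score $s$). Splitting rule: given an evaluated point $x_a$ with edge vector $v_a$ and value $f_a$, let $I$ be an index maximizing $v_a(i)$ over $i\in\{1,\dots,n\}$ (ties broken by smallest index), let $z=\tfrac{v_a(I)}{2}e_I$, and add to the list the two candidates $(x_a+z,\ v_a-z,\ f_a-L\|v_a\|)$ and $(x_a-z,\ v_a-z,\ f_a-L\|v_a\|)$. Initialization: $x_1=v_1=(\theta^{-1},\theta^{-2},\dots,\theta^{-n})$, $f_1=f(P(x_1))$, and apply the splitting rule to $(x_1,v_1,f_1)$. For each $t\ge 2$: remove from the list a candidate with the smallest score (ties arbitrary), call its center $x_t$ and edge vector $v_t$, evaluate $f_t=f(P(x_t))$,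 and apply the splitting rule to $(x_t,v_t,f_t)$. *)

theory Defs
  imports Complex_Main "HOL-Library.Multiset"
begin

text \<open>Vectors of R^n are represented as functions nat => real, using the
coordinates 0..n-1 (coordinate i here is coordinate i+1 of the paper);
all vectors produced by the algorithm vanish outside {..<n}.\<close>

type_synonym vec = "nat \<Rightarrow> real"
type_synonym cand = "vec \<times> vec \<times> real"  \<comment> \<open>(center, edge vector, score)\<close>

definition enorm :: "nat \<Rightarrow> vec \<Rightarrow> real" where
  "enorm n v = sqrt (\<Sum>i<n. (v i)\<^sup>2)"

definition cube :: "nat \<Rightarrow> vec set" where
  "cube n = {x. \<forall>i. (i < n \<longrightarrow> 0 \<le> x i \<and> x i \<le> 1) \<and> (n \<le> i \<longrightarrow> x i = 0)}"

definition proj :: "nat \<Rightarrow> vec \<Rightarrow> vec" where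
  "proj n x = (\<lambda>i. if i < n then min 1 (max 0 (x i)) else 0)"

definition theta :: "nat \<Rightarrow> real" where
  "theta n = 2 powr (1 / real n)"

definition unitv :: "nat \<Rightarrow> vec" where
  "unitv k = (\<lambda>i. if i = k then 1 else 0)"

definition maxidx :: "nat \<Rightarrow> vec \<Rightarrow> nat" where
  "maxidx n v = (LEAST i. i < n \<and> (\<forall>j<n. v j \<le> v i))"

definition split_cands :: "nat \<Rightarrow> real \<Rightarrow> vec \<Rightarrow> vec \<Rightarrow> real \<Rightarrow> cand multiset" where
  "split_cands n L xa va fa =
     (let I = maxidx n va; z = (\<lambda>i. (va I / 2) * unitv I i) in
      {# ((\<lambda>i. xa i + z i), (\<lambda>i. va i - z i), fa - L * enorm n va),
         ((\<lambda>i. xa i - z i), (\<lambda>i. va i - z i), fa - L * enorm n va) #})"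

definition x_init :: "nat \<Rightarrow> vec" where
  "x_init n = (\<lambda>i. if i < n then inverse (theta n ^ (i + 1)) else 0)"

text \<open>States of the algorithm: (candidate list, history of queries (x_t, v_t, f_t) in order).
  algo_reach n L f S holds iff S is reachable by some run (ties in the selection arbitrary).\<close>
inductive algo_reach :: "nat \<Rightarrow> real \<Rightarrow> (vec \<Rightarrow> real) \<Rightarrow> cand multiset \<times> cand list \<Rightarrow> bool"
  for n L f where
  init: "algo_reach n L f
           (split_cands n L (x_init n) (x_init n) (f (proj n (x_init n))),
            [(x_init n, x_init n, f (proj n (x_init n)))])"
| step: "\<lbrakk> algo_reach n L f (C, H); c \<in># C; \<forall>c' \<in># C. snd (snd c) \<le> snd (snd c') \<rbrakk> \<Longrightarrow>
         algo_reach n L f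
           (C - {#c#} + split_cands n L (fst c) (fst (snd c)) (f (proj n (fst c))),
            H @ [(fst c, fst (snd c), f (proj n (fst c)))])"

end

theory Submission
  imports Defs
begin

text \<open>Every edge vector produced by the algorithm has coordinates
  \<theta>^-(m+1), ..., \<theta>^-(m+n) in some order; halving the largest one turns it into
  \<theta>^-(m+n+1), so each split shrinks the norm of the edge vector by exactly \<theta>. A child's
  centre lies within the norm of its own edge vector v from its parent's, so by the Lipschitz
  bound every candidate satisfies f(P x) \<le> score + (1 + \<theta>) L |v|. Conversely the list
  always contains a box around any fixed point y of the cube whose score is at most f(y); as
  the queried candidate has minimal score, f_t - f(y) \<le> (1 + \<theta>) L |v_t|. This holds for
  every y in the cube.\<close>

definition shrink_factor :: "nat \<Rightarrow> real" where
  "shrink_factor n = inverse (theta n)"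

lemma theta_gt_1: "n \<ge> 1 \<Longrightarrow> theta n > 1"
  unfolding theta_def by (simp add: powr_gt_zero)

lemma theta_power_dim: "n \<ge> 1 \<Longrightarrow> theta n ^ n = 2"
  unfolding theta_def by (simp add: powr_realpow[symmetric] powr_powr)

lemma shrink_factor_pos: "n \<ge> 1 \<Longrightarrow> 0 < shrink_factor n"
  unfolding shrink_factor_def using theta_gt_1[of n] by simp

lemma shrink_factor_less_1: "n \<ge> 1 \<Longrightarrow> shrink_factor n < 1"
  unfolding shrink_factor_def using theta_gt_1[of n] by (simp add: inverse_less_1_iff)

lemma shrink_factor_power_dim: "n \<ge> 1 \<Longrightarrow> shrink_factor n ^ n = 1 / 2"
  unfolding shrink_factor_def using theta_power_dim by (simp add: power_inverse)

lemma theta_mult_shrink_factor: "n \<ge> 1 \<Longrightarrow> theta n * shrink_factor n = 1"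
  unfolding shrink_factor_def using theta_gt_1[of n] by simp

definition edge_profile :: "nat \<Rightarrow> vec \<Rightarrow> real multiset" where
  "edge_profile n v = image_mset v (mset_set {..<n})"

definition edge_at_level :: "nat \<Rightarrow> nat \<Rightarrow> vec \<Rightarrow> bool" where
  "edge_at_level n m v \<longleftrightarrow>
     edge_profile n v = mset (map (\<lambda>k. shrink_factor n ^ k) [Suc m..<Suc m + n])"

lemma enorm_eq_sum_profile: "enorm n v = sqrt (\<Sum>x\<in>#edge_profile n v. x\<^sup>2)"
  unfolding enorm_def edge_profile_def by (simp add: sum_unfold_sum_mset multiset.map_comp o_def)

lemma enorm_at_level:
  "edge_at_level n m v \<Longrightarrow> enorm n v = sqrt (\<Sum>k\<leftarrow>[Suc m..<Suc m + n]. (shrink_factor n ^ k)\<^sup>2)"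
  unfolding enorm_eq_sum_profile edge_at_level_def
  by (simp del: upt_Suc add: sum_mset_sum_list o_def flip: mset_map)

lemma enorm_at_level_Suc:
  assumes n: "n \<ge> 1" and v: "edge_at_level n m v" and w: "edge_at_level n (Suc m) w"
  shows "enorm n v = theta n * enorm n w"
proof -
  let ?q = "shrink_factor n"
  have "(\<Sum>k\<leftarrow>[Suc (Suc m)..<Suc (Suc m) + n]. (?q ^ k)\<^sup>2)
      = (\<Sum>k\<leftarrow>[Suc m..<Suc m + n]. ?q\<^sup>2 * (?q ^ k)\<^sup>2)"
    by (simp del: upt_Suc flip: map_Suc_upt add: o_def power_mult_distrib)
  also have "\<dots> = ?q\<^sup>2 * (\<Sum>k\<leftarrow>[Suc m..<Suc m + n]. (?q ^ k)\<^sup>2)"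
    by (simp add: sum_list_const_mult)
  finally have "enorm n w = ?q * enorm n v"
    using shrink_factor_pos[OF n] by (simp add: enorm_at_level[OF v] enorm_at_level[OF w] real_sqrt_mult)
  then show ?thesis
    using theta_mult_shrink_factor[OF n] by (simp flip: mult.assoc)
qed

lemma maxidx_less: "n \<ge> 1 \<Longrightarrow> maxidx n v < n"
  and maxidx_max: "n \<ge> 1 \<Longrightarrow> j < n \<Longrightarrow> v j \<le> v (maxidx n v)"
proof -
  assume "n \<ge> 1"
  then have "Max (v ` {..<n}) \<in> v ` {..<n}" by (intro Max_in) (auto simp: lessThan_empty_iff)
  then obtain i where "i < n" "v i = Max (v ` {..<n})" by auto
  then have "\<exists>i. i < n \<and> (\<forall>j<n. v j \<le> v i)" by auto
  then have "maxidx n v < n \<and> (\<forall>j<n. v j \<le> v (maxidx n v))"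
    unfolding maxidx_def by (rule LeastI_ex)
  then show "maxidx n v < n" "j < n \<Longrightarrow> v j \<le> v (maxidx n v)" by auto
qed

definition split_shift :: "nat \<Rightarrow> vec \<Rightarrow> vec" where
  "split_shift n v = (\<lambda>i. (v (maxidx n v) / 2) * unitv (maxidx n v) i)"

lemma split_cands_eq:
  "split_cands n L x v s =
     {# ((\<lambda>i. x i + split_shift n v i), (\<lambda>i. v i - split_shift n v i), s - L * enorm n v),
        ((\<lambda>i. x i - split_shift n v i), (\<lambda>i. v i - split_shift n v i), s - L * enorm n v) #}"
  unfolding split_cands_def split_shift_def Let_def ..

lemma split_edge_eq_upd:
  "(\<lambda>i. v i - split_shift n v i) = v(maxidx n v := v (maxidx n v) / 2)"
  by (auto simp: split_shift_def unitv_def)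

lemma edge_profile_upd:
  "i < n \<Longrightarrow> edge_profile n (v(i := a)) = edge_profile n v - {#v i#} + {#a#}"
proof -
  assume "i < n"
  then have split: "mset_set {..<n} = add_mset i (mset_set ({..<n} - {i}))"
    by (simp add: mset_set.remove)
  have "image_mset (v(i := a)) (mset_set ({..<n} - {i})) = image_mset v (mset_set ({..<n} - {i}))"
    by (intro image_mset_cong) auto
  then show ?thesis unfolding edge_profile_def split by simp
qed

lemma edge_at_level_split:
  assumes n: "n \<ge> 1" and v: "edge_at_level n m v"
  shows "edge_at_level n (Suc m) (\<lambda>i. v i - split_shift n v i)"
proof -
  let ?q = "shrink_factor n" and ?I = "maxidx n v"
  have q: "0 < ?q" "?q < 1" using shrink_factor_pos[OF n] shrink_factor_less_1[OF n] by auto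
  have prof: "edge_profile n v = mset (map (\<lambda>k. ?q ^ k) [Suc m..<Suc m + n])"
    using v unfolding edge_at_level_def .
  have "v ?I \<in># edge_profile n v"
    using maxidx_less[OF n] by (simp add: edge_profile_def)
  then obtain k where k: "Suc m \<le> k" "v ?I = ?q ^ k" by (auto simp del: upt_Suc simp: prof)
  have "?q ^ Suc m \<in># edge_profile n v" using n by (simp del: upt_Suc add: prof upt_conv_Cons)
  then obtain j where "j < n" "v j = ?q ^ Suc m" by (auto simp: edge_profile_def)
  then have "?q ^ Suc m \<le> ?q ^ k" using maxidx_max[OF n] k(2) by metis
  then have "k = Suc m" using k(1) q by (simp del: power_Suc add: power_decreasing_iff)
  then have vI: "v ?I = ?q ^ Suc m" using k(2) by simp
  have half: "?q ^ Suc m / 2 = ?q ^ (Suc m + n)"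
    by (simp add: power_add shrink_factor_power_dim[OF n])
  have "edge_profile n (\<lambda>i. v i - split_shift n v i)
      = mset (map (\<lambda>k. ?q ^ k) [Suc m..<Suc m + n]) - {#?q ^ Suc m#} + {#?q ^ (Suc m + n)#}"
    unfolding split_edge_eq_upd edge_profile_upd[OF maxidx_less[OF n]] vI half prof ..
  also have "\<dots> = mset (map (\<lambda>k. ?q ^ k) ([Suc (Suc m)..<Suc m + n] @ [Suc m + n]))"
    using n by (simp del: upt_Suc add: upt_conv_Cons)
  also have "[Suc (Suc m)..<Suc m + n] @ [Suc m + n] = [Suc (Suc m)..<Suc (Suc m) + n]"
    using n upt_Suc_append[of "Suc (Suc m)" "Suc m + n"] by simp
  finally show ?thesis unfolding edge_at_level_def .
qed

lemma edge_at_level_x_init: "edge_at_level n 0 (x_init n)"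
proof -
  have "edge_profile n (x_init n) = image_mset (\<lambda>i. shrink_factor n ^ Suc i) (mset_set {..<n})"
    unfolding edge_profile_def x_init_def shrink_factor_def
    by (intro image_mset_cong) (simp add: power_inverse)
  also have "\<dots> = mset (map (\<lambda>k. shrink_factor n ^ k) [Suc 0..<Suc 0 + n])"
    by (simp del: upt_Suc flip: map_Suc_upt add: o_def mset_upt atLeast0LessThan)
  finally show ?thesis unfolding edge_at_level_def .
qed

lemma enorm_nonneg: "0 \<le> enorm n v"
  unfolding enorm_def by (simp add: sum_nonneg)

lemma enorm_mono: "(\<And>i. i < n \<Longrightarrow> \<bar>a i\<bar> \<le> \<bar>b i\<bar>) \<Longrightarrow> enorm n a \<le> enorm n b"
  unfolding enorm_def by (intro real_sqrt_le_mono sum_mono) (simp add: abs_le_square_iff)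

lemma proj_in_cube: "proj n x \<in> cube n"
  unfolding proj_def cube_def by auto

lemma proj_cube_id: "y \<in> cube n \<Longrightarrow> proj n y = y"
  unfolding proj_def cube_def by (auto simp: fun_eq_iff)

lemma enorm_proj_diff_le: "enorm n (\<lambda>i. proj n x i - proj n y i) \<le> enorm n (\<lambda>i. x i - y i)"
  by (rule enorm_mono) (auto simp: proj_def min_def max_def abs_if)

definition cube_lipschitz :: "nat \<Rightarrow> real \<Rightarrow> (vec \<Rightarrow> real) \<Rightarrow> bool" where
  "cube_lipschitz n L f \<longleftrightarrow> (\<forall>x\<in>cube n. \<forall>y\<in>cube n. \<bar>f x - f y\<bar> \<le> L * enorm n (\<lambda>i. x i - y i))"

lemma cube_lipschitz_proj:
  assumes "cube_lipschitz n L f" and "0 \<le> L"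
  shows "f (proj n x) - f (proj n y) \<le> L * enorm n (\<lambda>i. x i - y i)"
proof -
  have "f (proj n x) - f (proj n y) \<le> L * enorm n (\<lambda>i. proj n x i - proj n y i)"
    using assms(1) proj_in_cube unfolding cube_lipschitz_def by (metis abs_le_D1)
  also have "\<dots> \<le> L * enorm n (\<lambda>i. x i - y i)"
    using assms(2) enorm_proj_diff_le by (rule mult_left_mono[rotated])
  finally show ?thesis .
qed

definition in_box :: "nat \<Rightarrow> vec \<Rightarrow> vec \<Rightarrow> vec \<Rightarrow> bool" where
  "in_box n y x v \<longleftrightarrow> (\<forall>i<n. \<bar>y i - x i\<bar> \<le> v i)"

lemma in_box_value_lower_bound:
  assumes "cube_lipschitz n L f" and "0 \<le> L" and "y \<in> cube n" and "in_box n y x v"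
  shows "f (proj n x) - L * enorm n v \<le> f y"
proof -
  have "f (proj n x) - f y \<le> L * enorm n (\<lambda>i. x i - y i)"
    using cube_lipschitz_proj[OF assms(1,2), of x y] proj_cube_id[OF assms(3)] by simp
  also have "\<dots> \<le> L * enorm n v"
    using assms(2,4) unfolding in_box_def
    by (intro mult_left_mono enorm_mono) (auto simp: abs_minus_commute)
  finally show ?thesis by simp
qed

lemma x_init_box_covers_cube:
  assumes n: "n \<ge> 1" and y: "y \<in> cube n"
  shows "in_box n y (x_init n) (x_init n)"
  unfolding in_box_def
proof (intro allI impI)
  fix i assume i: "i < n"
  let ?q = "shrink_factor n"
  have "?q ^ n \<le> ?q ^ Suc i"
    using i shrink_factor_pos[OF n] shrink_factor_less_1[OF n] by (intro power_decreasing) auto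
  then have "1 / 2 \<le> x_init n i"
    using i shrink_factor_power_dim[OF n] by (simp add: x_init_def shrink_factor_def power_inverse)
  moreover have "0 \<le> y i" "y i \<le> 1" using y i unfolding cube_def by auto
  ultimately show "\<bar>y i - x_init n i\<bar> \<le> x_init n i" by (simp add: abs_if)
qed

lemma split_cands_in_box:
  assumes "in_box n y x v"
  shows "\<exists>c\<in>#split_cands n L x v s. in_box n y (fst c) (fst (snd c)) \<and> snd (snd c) = s - L * enorm n v"
proof (cases "y (maxidx n v) \<ge> x (maxidx n v)")
  case True
  then have "in_box n y (\<lambda>i. x i + split_shift n v i) (\<lambda>i. v i - split_shift n v i)"
    using assms unfolding in_box_def split_shift_def unitv_def by (auto simp: abs_if)
  then show ?thesis unfolding split_cands_eq by auto
next
  case False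
  then have "in_box n y (\<lambda>i. x i - split_shift n v i) (\<lambda>i. v i - split_shift n v i)"
    using assms unfolding in_box_def split_shift_def unitv_def by (auto simp: abs_if)
  then show ?thesis unfolding split_cands_eq by auto
qed

definition sound_cand :: "nat \<Rightarrow> real \<Rightarrow> (vec \<Rightarrow> real) \<Rightarrow> cand \<Rightarrow> bool" where
  "sound_cand n L f c \<longleftrightarrow> (\<exists>m. edge_at_level n m (fst (snd c))) \<and>
     f (proj n (fst c)) \<le> snd (snd c) + (1 + theta n) * L * enorm n (fst (snd c))"

lemma split_cands_sound:
  assumes n: "n \<ge> 1" and L: "0 \<le> L" and lip: "cube_lipschitz n L f"
    and v: "edge_at_level n m v" and c: "c \<in># split_cands n L x v (f (proj n x))"
  shows "sound_cand n L f c"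
proof -
  define w where "w = (\<lambda>i. v i - split_shift n v i)"
  have w: "edge_at_level n (Suc m) w"
    unfolding w_def using edge_at_level_split[OF n v] .
  have "enorm n v = theta n * enorm n w"
    using enorm_at_level_Suc[OF n v w] .
  moreover
  obtain x' where c_eq: "c = (x', w, f (proj n x) - L * enorm n v)"
    and shift: "\<And>i. \<bar>x' i - x i\<bar> = \<bar>split_shift n v i\<bar>"
    using c unfolding split_cands_eq w_def by auto
  have "enorm n (\<lambda>i. x' i - x i) \<le> enorm n w"
    unfolding w_def by (rule enorm_mono) (simp add: shift split_shift_def unitv_def)
  then have "f (proj n x') - f (proj n x) \<le> L * enorm n w"
    using cube_lipschitz_proj[OF lip L, of x' x] L by (meson mult_left_mono order_trans)
  ultimately show ?thesis
    using w unfolding sound_cand_def c_eq by (auto simp: algebra_simps)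
qed

definition covers :: "nat \<Rightarrow> (vec \<Rightarrow> real) \<Rightarrow> vec \<Rightarrow> cand \<Rightarrow> bool" where
  "covers n f y c \<longleftrightarrow> in_box n y (fst c) (fst (snd c)) \<and> snd (snd c) \<le> f y"

lemma split_cands_covers:
  assumes "cube_lipschitz n L f" and "0 \<le> L" and "y \<in> cube n" and "in_box n y x v"
  shows "\<exists>c\<in>#split_cands n L x v (f (proj n x)). covers n f y c"
  using split_cands_in_box[OF assms(4)] in_box_value_lower_bound[OF assms]
  unfolding covers_def by force

lemma algo_reach_invariant:
  assumes n: "n \<ge> 1" and L: "0 \<le> L" and lip: "cube_lipschitz n L f" and y: "y \<in> cube n"
    and "algo_reach n L f (C, H)"
  shows "(\<forall>c\<in>#C. sound_cand n L f c) \<and> (\<exists>c\<in>#C. covers n f y c) \<and>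
         (\<forall>h\<in>set H. snd (snd h) - f y \<le> (1 + theta n) * L * enorm n (fst (snd h)))"
  using assms(5)
proof (induction "(C, H)" arbitrary: C H rule: algo_reach.induct)
  case init
  have box: "in_box n y (x_init n) (x_init n)"
    by (rule x_init_box_covers_cube[OF n y])
  have "L * enorm n (x_init n) \<le> (1 + theta n) * L * enorm n (x_init n)"
    using L theta_gt_1[OF n] enorm_nonneg[of n "x_init n"] by (simp add: algebra_simps)
  then show ?case
    using split_cands_sound[OF n L lip edge_at_level_x_init] split_cands_covers[OF lip L y box]
      in_box_value_lower_bound[OF lip L y box] by auto
next
  case (step C H c)
  note IH = step(2) and c_in = step(3) and c_min = step(4)
  from IH obtain c0 where "c0 \<in># C" and c0: "covers n f y c0" by blast
  have "sound_cand n L f c" using IH c_in by blast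
  then obtain m where m: "edge_at_level n m (fst (snd c))"
    and c: "f (proj n (fst c)) \<le> snd (snd c) + (1 + theta n) * L * enorm n (fst (snd c))"
    unfolding sound_cand_def by blast
  have "snd (snd c) \<le> f y"
    using c_min \<open>c0 \<in># C\<close> c0 unfolding covers_def by force
  then have "f (proj n (fst c)) - f y \<le> (1 + theta n) * L * enorm n (fst (snd c))"
    using c by linarith
  moreover have "\<exists>d\<in>#C - {#c#} + split_cands n L (fst c) (fst (snd c)) (f (proj n (fst c))).
      covers n f y d"
  proof (cases "c0 = c")
    case True
    then show ?thesis
      using split_cands_covers[OF lip L y] c0 unfolding covers_def by fastforce
  next
    case False
    then show ?thesis using \<open>c0 \<in># C\<close> c0 by (auto simp: in_diff_count count_gt_imp_in_mset)
  qed
  ultimately show ?case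
    using IH split_cands_sound[OF n L lip m] by (auto dest: in_diffD)
qed

theorem lemma3:
  fixes n :: nat and L :: real and f :: "vec \<Rightarrow> real" and xstar :: vec
    and C :: "cand multiset" and H :: "cand list" and T :: nat
  assumes "n \<ge> 1" and "L > 0"
    and "\<forall>x\<in>cube n. \<forall>y\<in>cube n. \<bar>f x - f y\<bar> \<le> L * enorm n (\<lambda>i. x i - y i)"
    and "xstar \<in> cube n" and "\<forall>y\<in>cube n. f xstar \<le> f y"
    and "algo_reach n L f (C, H)" and "length H = T" and "T \<ge> 1"
  shows "(\<Sum>t<T. snd (snd (H ! t))) - (\<Sum>t<T. f xstar)
           \<le> (1 + theta n) * L * (\<Sum>t<T. enorm n (fst (snd (H ! t))))"
proof -
  have "cube_lipschitz n L f" "0 \<le> L"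
    using assms(2,3) unfolding cube_lipschitz_def by auto
  then have regret: "snd (snd (H ! t)) - f xstar \<le> (1 + theta n) * L * enorm n (fst (snd (H ! t)))"
    if "t < T" for t
    using algo_reach_invariant[OF assms(1) _ _ assms(4,6)] that assms(7) by auto
  have "(\<Sum>t<T. snd (snd (H ! t))) - (\<Sum>t<T. f xstar) = (\<Sum>t<T. snd (snd (H ! t)) - f xstar)"
    by (simp add: sum_subtractf)
  also have "\<dots> \<le> (\<Sum>t<T. (1 + theta n) * L * enorm n (fst (snd (H ! t))))"
    using regret by (intro sum_mono) auto
  also have "\<dots> = (1 + theta n) * L * (\<Sum>t<T. enorm n (fst (snd (H ! t))))"
    by (simp add: sum_distrib_left)
  finally show ?thesis .
qed

end
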